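(* Let $(Q,P)$ be a weakly quasi-lattice ordered group and let $\Lambda$ be a $P$-graph with $\mathrm{FA}(\Lambda)\neq\emptyset$. With $\mathcal{X}(\Lambda)*P=\{(x,m)\in\mathcal{X}(\Lambda)\times P: x\cap\Lambda^m\neq\emptyset\}$ and $\mathrm{dom}(m)=\{x\in\mathcal{X}(\Lambda): x\cap\Lambda^m\neq\emptyset\}$, the semigroup action $(\mathcal{X}(\Lambda),P,T)$, $T(x,m)=\{\mu\in\Lambda: x(0,m)\mu\in x\}$, is directed: for all $m,n\in P$ with $\mathrm{dom}(m)\cap\mathrm{dom}(n)\neq\emptyset$ there is $l\in P$ with $m,n\le l$ and $\mathrm{dom}(m)\cap\mathrm{dom}(n)\subseteq\mathrm{dom}(l)$.
   Context: $(Q,P)$ weakly quasi-lattice ordered: $Q$ a discrete group, $P\subseteq Q$ a subsemigroup containing the identity $e$ with $P\cap P^{-1}=\{e\}$, and, with $p\le r$ meaning $pq=r$ for some $q\in P$, any two elements of $P$ with a common upper bound have a least common upper bound. A $P$-graph is a countable small category $\Lambda$ (range/source $r,s$) with a functor $d:\Lambda\to P$ with unique factorisation (if $d(\lambda)=pq$ there are unique $\mu,\nu$ with $\lambda=\mu\nu$, $d(\mu)=p$, $d(\nu)=q$). Write $\Lambda^m=d^{-1}(m)$, $\lambda\Lambda=\{\lambda\mu: s(\lambda)=r(\mu)\}$, $\mu\preceq\lambda$ iff $\lambda\in\mu\Lambda$. $\mathrm{FA}(\Lambda)$ is the set of $\lambda$ such that for all $\mu\in\lambda\Lambda,\nu\in\Lambda$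 there is a finite $J\subseteq\Lambda$ with $\mu\Lambda\cap\nu\Lambda=\bigcup_{\kappa\in J}\kappa\Lambda$. A filter is a nonempty hereditary and directed subset of $\Lambda$ (w.r.t. $\preceq$); for a filter $x$, $d|_x$ is injective, and $x(0,m)$ denotes the unique element of $x\cap\Lambda^m$ when nonempty. Path space $\mathcal{X}(\Lambda)=\{x\text{ filter}: x\cap\mathrm{FA}(\Lambda)\neq\emptyset\}$. $(\mathcal{X}(\Lambda),P,T)$ is a semigroup action in the sense that $(x,e)\in\mathcal{X}(\Lambda)*P$ with $T(x,e)=x$, and $(x,mn)\in\mathcal{X}(\Lambda)*P$ iff $(x,m),(T(x,m),n)\in\mathcal{X}(\Lambda)*P$, with $T(T(x,m),n)=T(x,mn)$. *)

theory Defs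
  imports "HOL-Algebra.Group" "HOL-Library.Countable_Set"
begin

definition pos_le :: "('q, 'b) monoid_scheme \<Rightarrow> 'q set \<Rightarrow> 'q \<Rightarrow> 'q \<Rightarrow> bool" where
  "pos_le G P p r \<longleftrightarrow> (\<exists>q\<in>P. p \<otimes>\<^bsub>G\<^esub> q = r)"

definition wqlo :: "('q, 'b) monoid_scheme \<Rightarrow> 'q set \<Rightarrow> bool" where
  "wqlo G P \<longleftrightarrow>
     group G \<and> P \<subseteq> carrier G \<and> \<one>\<^bsub>G\<^esub> \<in> P
     \<and> (\<forall>p\<in>P. \<forall>q\<in>P. p \<otimes>\<^bsub>G\<^esub> q \<in> P)
     \<and> P \<inter> {inv\<^bsub>G\<^esub> p | p. p \<in> P} = {\<one>\<^bsub>G\<^esub>}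
     \<and> (\<forall>p\<in>P. \<forall>r\<in>P. (\<exists>u\<in>P. pos_le G P p u \<and> pos_le G P r u) \<longrightarrow>
          (\<exists>l\<in>P. pos_le G P p l \<and> pos_le G P r l \<and>
              (\<forall>u\<in>P. pos_le G P p u \<and> pos_le G P r u \<longrightarrow> pos_le G P l u)))"

text \<open>A small category given by an object set, a morphism set, range, source, composition
  (pg_comp a b is the composite "a b", defined when pg_src a = pg_rng b) and identities,
  together with a degree functor pg_deg into P.\<close>
record ('v, 'a, 'q) pgraph =
  pg_obj  :: "'v set"
  pg_mor  :: "'a set"
  pg_rng  :: "'a \<Rightarrow> 'v"
  pg_src  :: "'a \<Rightarrow> 'v"
  pg_comp :: "'a \<Rightarrow> 'a \<Rightarrow> 'a"
  pg_id   :: "'v \<Rightarrow> 'a"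
  pg_deg  :: "'a \<Rightarrow> 'q"

definition small_category :: "('v, 'a, 'q) pgraph \<Rightarrow> bool" where
  "small_category L \<longleftrightarrow>
     (\<forall>a\<in>pg_mor L. pg_rng L a \<in> pg_obj L \<and> pg_src L a \<in> pg_obj L)
   \<and> (\<forall>v\<in>pg_obj L. pg_id L v \<in> pg_mor L \<and> pg_rng L (pg_id L v) = v \<and> pg_src L (pg_id L v) = v)
   \<and> (\<forall>a\<in>pg_mor L. \<forall>b\<in>pg_mor L. pg_src L a = pg_rng L b \<longrightarrow>
        pg_comp L a b \<in> pg_mor L \<and> pg_rng L (pg_comp L a b) = pg_rng L a
        \<and> pg_src L (pg_comp L a b) = pg_src L b)
   \<and> (\<forall>a\<in>pg_mor L. \<forall>b\<in>pg_mor L. \<forall>c\<in>pg_mor L.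
        pg_src L a = pg_rng L b \<longrightarrow> pg_src L b = pg_rng L c \<longrightarrow>
        pg_comp L (pg_comp L a b) c = pg_comp L a (pg_comp L b c))
   \<and> (\<forall>a\<in>pg_mor L. pg_comp L (pg_id L (pg_rng L a)) a = a \<and> pg_comp L a (pg_id L (pg_src L a)) = a)"

definition is_pgraph :: "('q, 'b) monoid_scheme \<Rightarrow> 'q set \<Rightarrow> ('v, 'a, 'q) pgraph \<Rightarrow> bool" where
  "is_pgraph G P L \<longleftrightarrow>
     small_category L \<and> countable (pg_obj L) \<and> countable (pg_mor L)
   \<and> (\<forall>a\<in>pg_mor L. pg_deg L a \<in> P)
   \<and> (\<forall>v\<in>pg_obj L. pg_deg L (pg_id L v) = \<one>\<^bsub>G\<^esub>)
   \<and> (\<forall>a\<in>pg_mor L. \<forall>b\<in>pg_mor L. pg_src L a = pg_rng L b \<longrightarrow>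
        pg_deg L (pg_comp L a b) = pg_deg L a \<otimes>\<^bsub>G\<^esub> pg_deg L b)
   \<and> (\<forall>a\<in>pg_mor L. \<forall>p\<in>P. \<forall>q\<in>P. pg_deg L a = p \<otimes>\<^bsub>G\<^esub> q \<longrightarrow>
        (\<exists>!(b, c). b \<in> pg_mor L \<and> c \<in> pg_mor L \<and> pg_src L b = pg_rng L c
             \<and> a = pg_comp L b c \<and> pg_deg L b = p \<and> pg_deg L c = q))"

definition pg_deg_set :: "('v, 'a, 'q) pgraph \<Rightarrow> 'q \<Rightarrow> 'a set" where
  "pg_deg_set L m = {a \<in> pg_mor L. pg_deg L a = m}"

definition pg_ext :: "('v, 'a, 'q) pgraph \<Rightarrow> 'a \<Rightarrow> 'a set" where
  "pg_ext L a = {pg_comp L a b | b. b \<in> pg_mor L \<and> pg_src L a = pg_rng L b}"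

definition pg_prec :: "('v, 'a, 'q) pgraph \<Rightarrow> 'a \<Rightarrow> 'a \<Rightarrow> bool" where
  "pg_prec L b a \<longleftrightarrow> a \<in> pg_ext L b"

definition FA :: "('v, 'a, 'q) pgraph \<Rightarrow> 'a set" where
  "FA L = {a \<in> pg_mor L. \<forall>b\<in>pg_ext L a. \<forall>c\<in>pg_mor L.
      \<exists>J. finite J \<and> J \<subseteq> pg_mor L \<and> pg_ext L b \<inter> pg_ext L c = (\<Union>k\<in>J. pg_ext L k)}"

definition is_filter :: "('v, 'a, 'q) pgraph \<Rightarrow> 'a set \<Rightarrow> bool" where
  "is_filter L x \<longleftrightarrow> x \<noteq> {} \<and> x \<subseteq> pg_mor L
     \<and> (\<forall>a\<in>x. \<forall>b\<in>pg_mor L. pg_prec L b a \<longrightarrow> b \<in> x)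
     \<and> (\<forall>a\<in>x. \<forall>b\<in>x. \<exists>c\<in>x. pg_prec L a c \<and> pg_prec L b c)"

definition path_space :: "('v, 'a, 'q) pgraph \<Rightarrow> 'a set set" where
  "path_space L = {x. is_filter L x \<and> x \<inter> FA L \<noteq> {}}"

definition act_dom :: "('v, 'a, 'q) pgraph \<Rightarrow> 'q \<Rightarrow> 'a set set" where
  "act_dom L m = {x \<in> path_space L. x \<inter> pg_deg_set L m \<noteq> {}}"

text \<open>x(0,m) and the shift map T(x,m) (not needed for the directedness condition itself)\<close>
definition seg :: "('v, 'a, 'q) pgraph \<Rightarrow> 'a set \<Rightarrow> 'q \<Rightarrow> 'a" where
  "seg L x m = (THE a. a \<in> x \<inter> pg_deg_set L m)"

definition shift :: "('v, 'a, 'q) pgraph \<Rightarrow> 'a set \<Rightarrow> 'q \<Rightarrow> 'a set" where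
  "shift L x m = {b \<in> pg_mor L. pg_src L (seg L x m) = pg_rng L b \<and> pg_comp L (seg L x m) b \<in> x}"

end

theory Submission
  imports Defs
begin

text \<open>Every x in dom(m) \<inter> dom(n) is directed, so it contains a path whose degree is a common
  upper bound of m and n; hence m and n have a least common upper bound l. For any such x the
  degree of a path in x is again a common upper bound, so it lies above l, and by unique
  factorisation that path has an initial segment of degree l, which belongs to x because filters
  are hereditary.\<close>

lemma is_pgraph_deg_in_pos:
  "is_pgraph G P L \<Longrightarrow> a \<in> pg_mor L \<Longrightarrow> pg_deg L a \<in> P"
  unfolding is_pgraph_def by (elim conjE) (erule bspec)

lemma is_pgraph_deg_comp:
  "is_pgraph G P L \<Longrightarrow> a \<in> pg_mor L \<Longrightarrow> b \<in> pg_mor L \<Longrightarrow> pg_src L a = pg_rng L b \<Longrightarrow>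
    pg_deg L (pg_comp L a b) = pg_deg L a \<otimes>\<^bsub>G\<^esub> pg_deg L b"
  unfolding is_pgraph_def by (elim conjE) simp

lemma is_pgraph_factorisation:
  assumes "is_pgraph G P L" and "a \<in> pg_mor L" "p \<in> P" "q \<in> P" "pg_deg L a = p \<otimes>\<^bsub>G\<^esub> q"
  obtains b c where "b \<in> pg_mor L" "c \<in> pg_mor L" "pg_src L b = pg_rng L c"
    "a = pg_comp L b c" "pg_deg L b = p" "pg_deg L c = q"
proof -
  have "\<forall>a\<in>pg_mor L. \<forall>p\<in>P. \<forall>q\<in>P. pg_deg L a = p \<otimes>\<^bsub>G\<^esub> q \<longrightarrow>
        (\<exists>!(b, c). b \<in> pg_mor L \<and> c \<in> pg_mor L \<and> pg_src L b = pg_rng L c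
             \<and> a = pg_comp L b c \<and> pg_deg L b = p \<and> pg_deg L c = q)"
    using assms(1) unfolding is_pgraph_def by (elim conjE) assumption
  from this[rule_format, OF assms(2-5)] obtain bc
    where "case bc of (b, c) \<Rightarrow> b \<in> pg_mor L \<and> c \<in> pg_mor L \<and> pg_src L b = pg_rng L c
      \<and> a = pg_comp L b c \<and> pg_deg L b = p \<and> pg_deg L c = q"
    by (rule ex1E)
  with that show thesis by (cases bc) blast
qed

lemma is_filter_mem_mor: "is_filter L x \<Longrightarrow> a \<in> x \<Longrightarrow> a \<in> pg_mor L"
  unfolding is_filter_def by blast

lemma pg_prec_imp_pos_le_deg:
  assumes pg: "is_pgraph G P L" and a: "a \<in> pg_mor L" and prec: "pg_prec L a c"
  shows "pos_le G P (pg_deg L a) (pg_deg L c)"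
proof -
  from prec obtain b where b: "b \<in> pg_mor L" "pg_src L a = pg_rng L b" "c = pg_comp L a b"
    unfolding pg_prec_def pg_ext_def by blast
  then have "pg_deg L c = pg_deg L a \<otimes>\<^bsub>G\<^esub> pg_deg L b"
    using is_pgraph_deg_comp[OF pg a] by blast
  moreover have "pg_deg L b \<in> P" using is_pgraph_deg_in_pos[OF pg b(1)] .
  ultimately show ?thesis unfolding pos_le_def by metis
qed

lemma filter_obtain_common_upper_deg:
  assumes pg: "is_pgraph G P L" and x: "is_filter L x" and a: "a \<in> x" and b: "b \<in> x"
  obtains c where "c \<in> x" "pg_deg L c \<in> P"
    "pos_le G P (pg_deg L a) (pg_deg L c)" "pos_le G P (pg_deg L b) (pg_deg L c)"
proof -
  from x a b obtain c where c: "c \<in> x" "pg_prec L a c" "pg_prec L b c"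
    unfolding is_filter_def by blast
  show thesis
  proof (rule that[OF c(1)])
    show "pg_deg L c \<in> P"
      by (rule is_pgraph_deg_in_pos[OF pg is_filter_mem_mor[OF x c(1)]])
    show "pos_le G P (pg_deg L a) (pg_deg L c)"
      by (rule pg_prec_imp_pos_le_deg[OF pg is_filter_mem_mor[OF x a] c(2)])
    show "pos_le G P (pg_deg L b) (pg_deg L c)"
      by (rule pg_prec_imp_pos_le_deg[OF pg is_filter_mem_mor[OF x b] c(3)])
  qed
qed

lemma act_dom_inter_obtain_common_upper_deg:
  assumes pg: "is_pgraph G P L" and x: "x \<in> act_dom L m \<inter> act_dom L n"
  obtains c where "c \<in> x" "pg_deg L c \<in> P" "pos_le G P m (pg_deg L c)" "pos_le G P n (pg_deg L c)"
proof -
  from x obtain a b where "a \<in> x" "pg_deg L a = m" "b \<in> x" "pg_deg L b = n"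
    unfolding act_dom_def pg_deg_set_def by blast
  moreover have "is_filter L x"
    using x unfolding act_dom_def path_space_def by blast
  ultimately show thesis
    using that filter_obtain_common_upper_deg[OF pg] by metis
qed

lemma filter_meets_deg_set_below:
  assumes pg: "is_pgraph G P L" and x: "is_filter L x"
    and c: "c \<in> x" and l: "l \<in> P" and le: "pos_le G P l (pg_deg L c)"
  shows "x \<inter> pg_deg_set L l \<noteq> {}"
proof -
  from le obtain r where "r \<in> P" "pg_deg L c = l \<otimes>\<^bsub>G\<^esub> r"
    unfolding pos_le_def by metis
  then obtain c1 c2 where c1: "c1 \<in> pg_mor L" "pg_deg L c1 = l"
    and c2: "c2 \<in> pg_mor L" "pg_src L c1 = pg_rng L c2" "c = pg_comp L c1 c2"
    using is_pgraph_factorisation[OF pg is_filter_mem_mor[OF x c] l] by metis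
  then have "pg_prec L c1 c"
    unfolding pg_prec_def pg_ext_def by blast
  with x c c1(1) have "c1 \<in> x"
    unfolding is_filter_def by blast
  with c1 show ?thesis
    unfolding pg_deg_set_def by blast
qed

lemma wqlo_obtain_least_upper_bound:
  assumes "wqlo G P" and "m \<in> P" "n \<in> P"
    and "u \<in> P" "pos_le G P m u" "pos_le G P n u"
  obtains l where "l \<in> P" "pos_le G P m l" "pos_le G P n l"
    "\<And>u. u \<in> P \<Longrightarrow> pos_le G P m u \<Longrightarrow> pos_le G P n u \<Longrightarrow> pos_le G P l u"
proof -
  have "\<forall>p\<in>P. \<forall>r\<in>P. (\<exists>u\<in>P. pos_le G P p u \<and> pos_le G P r u) \<longrightarrow>
      (\<exists>l\<in>P. pos_le G P p l \<and> pos_le G P r l \<and>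
          (\<forall>u\<in>P. pos_le G P p u \<and> pos_le G P r u \<longrightarrow> pos_le G P l u))"
    using assms(1) unfolding wqlo_def by (elim conjE)
  with assms(2-) that show thesis by blast
qed

theorem proposition5p10:
  fixes G :: "('q, 'b) monoid_scheme" and P :: "'q set"
    and L :: "('v, 'a, 'q) pgraph"
  assumes "wqlo G P"
    and "is_pgraph G P L"
    and "FA L \<noteq> {}"
  shows "\<forall>m\<in>P. \<forall>n\<in>P. act_dom L m \<inter> act_dom L n \<noteq> {} \<longrightarrow>
           (\<exists>l\<in>P. pos_le G P m l \<and> pos_le G P n l
                  \<and> act_dom L m \<inter> act_dom L n \<subseteq> act_dom L l)"
proof (intro ballI impI)
  fix m n assume m: "m \<in> P" and n: "n \<in> P" and "act_dom L m \<inter> act_dom L n \<noteq> {}"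
  then obtain x0 where "x0 \<in> act_dom L m \<inter> act_dom L n" by blast
  then obtain c0 where "pg_deg L c0 \<in> P" "pos_le G P m (pg_deg L c0)" "pos_le G P n (pg_deg L c0)"
    by (rule act_dom_inter_obtain_common_upper_deg[OF assms(2)])
  then obtain l where l: "l \<in> P" "pos_le G P m l" "pos_le G P n l"
    and least: "\<And>u. u \<in> P \<Longrightarrow> pos_le G P m u \<Longrightarrow> pos_le G P n u \<Longrightarrow> pos_le G P l u"
    by (rule wqlo_obtain_least_upper_bound[OF assms(1) m n]) blast
  have "x \<in> act_dom L l" if x: "x \<in> act_dom L m \<inter> act_dom L n" for x
  proof -
    obtain c where "c \<in> x" "pos_le G P l (pg_deg L c)"
      using act_dom_inter_obtain_common_upper_deg[OF assms(2) x] least by metis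
    moreover have "x \<in> path_space L" and "is_filter L x"
      using x unfolding act_dom_def path_space_def by auto
    ultimately show ?thesis
      using filter_meets_deg_set_below[OF assms(2)] l(1) unfolding act_dom_def by blast
  qed
  with l show "\<exists>l\<in>P. pos_le G P m l \<and> pos_le G P n l \<and> act_dom L m \<inter> act_dom L n \<subseteq> act_dom L l"
    by blast
qed

end
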